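(* $9\,(\partial')^2=2\,(1-\partial^2)\,(4\partial^3-3\partial+1-2\lambda^2)/\partial^2$.
   Context: Let $0<\kappa<1$ and $\lambda=\sqrt{1-\kappa^2}$. Let $F(\tfrac16,\tfrac56;\tfrac12;\cdot)$ denote the Gauss hypergeometric function. Define $u$ as a function of $\phi$ near $0$ by $u=\int_0^{\sin\phi}F(\tfrac16,\tfrac56;\tfrac12;\kappa^2t^2)\,\frac{dt}{\sqrt{1-t^2}}$; near the origin (fixing $0$) this inverts to a holomorphic function $u\mapsto\phi(u)$ with $\phi(0)=0$. Let $\psi$ be the holomorphic function near $0$ with $\psi(0)=0$ and $\sin\psi=\kappa\sin\phi$. Set $\partial=\cos\tfrac23\psi$ (a function of $u$ on a small disc about $0$); primes denote $d/du$. *)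

theory Defs
  imports "HOL-Complex_Analysis.Complex_Analysis"
begin

definition hyp2f1 :: "complex \<Rightarrow> complex \<Rightarrow> complex \<Rightarrow> complex \<Rightarrow> complex" where
  "hyp2f1 a b c z =
     (\<Sum>n. pochhammer a n * pochhammer b n / (pochhammer c n * fact n) * z ^ n)"

definition U_of_phi :: "real \<Rightarrow> complex \<Rightarrow> complex" where
  "U_of_phi \<kappa> \<phi> =
     contour_integral (linepath 0 (sin \<phi>))
       (\<lambda>t. hyp2f1 (1/6) (5/6) (1/2) ((complex_of_real \<kappa>)\<^sup>2 * t\<^sup>2) / csqrt (1 - t\<^sup>2))"

end

theory Submission
  imports Defs
begin

(* Along t = sin phi the integrand of U_of_phi is F (kappa^2 sin^2 phi) dphi, where
  F = F(1/6, 5/6; 1/2; .), so F (kappa^2 sin^2 phi) phi' = 1. Since sin psi = kappa sin phi,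
  the classical evaluation F(a, 1 - a; 1/2; sin^2 x) cos x = cos ((1 - 2a) x) at a = 1/6 gives
  F (kappa^2 sin^2 phi) cos psi = cos (2/3 psi), and differentiating sin psi = kappa sin phi yields
  cos (2/3 psi) psi' = kappa cos phi, hence (cos (2/3 psi) psi')^2 = kappa^2 - sin^2 psi.
  The evaluation holds because W x = F(sin^2 x) cos x satisfies W'' = -(1 - 2a)^2 W by the
  hypergeometric equation, with W 0 = 1 and W' 0 = 0. The rest is algebra:
  d' = -2/3 sin (2/3 psi) psi', and 2 cos^2 psi = 1 + cos (3 (2/3 psi)) = 1 + 4 d^3 - 3 d. *)

lemma not_nonpos_Ints_if_Re_pos: "0 < Re z \<Longrightarrow> z \<notin> \<int>\<^sub>\<le>\<^sub>0"
  by (auto elim!: nonpos_Ints_cases)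

lemma LIMSEQ_add_of_nat_divide_add_of_nat:
  fixes x y :: "'a::real_normed_field"
  shows "(\<lambda>n. (x + of_nat n) / (y + of_nat n)) \<longlonglongrightarrow> 1"
proof -
  have "(\<lambda>n. (x / of_nat n + 1) / (y / of_nat n + 1)) \<longlonglongrightarrow> (0 + 1) / (0 + 1)"
    by (intro tendsto_intros) simp
  moreover have "\<forall>\<^sub>F n in sequentially.
      (x / of_nat n + 1) / (y / of_nat n + 1) = (x + of_nat n) / (y + of_nat n)"
    using eventually_gt_at_top[of 0]
    by eventually_elim (simp add: divide_add_eq_iff divide_divide_times_eq)
  ultimately show ?thesis
    by (simp add: tendsto_cong)
qed

lemma fps_conv_radius_gt_add_diff_mult:
  fixes f g :: "'a::{banach,real_normed_field} fps"
  assumes "r < fps_conv_radius f" "r < fps_conv_radius g"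
  shows "r < fps_conv_radius (f + g)" "r < fps_conv_radius (f - g)" "r < fps_conv_radius (f * g)"
proof -
  have "r < min (fps_conv_radius f) (fps_conv_radius g)"
    using assms by simp
  then show "r < fps_conv_radius (f + g)" "r < fps_conv_radius (f - g)"
    "r < fps_conv_radius (f * g)"
    using fps_conv_radius_add fps_conv_radius_diff fps_conv_radius_mult
    by (blast intro: less_le_trans)+
qed

lemma tendsto_nhds_if_holomorphic:
  assumes "f holomorphic_on S" "open S" "z \<in> S"
  shows "(f \<longlongrightarrow> f z) (nhds z)"
proof -
  have "isCont f z"
    using assms holomorphic_on_imp_continuous_on continuous_on_eq_continuous_at by blast
  then show ?thesis
    unfolding isCont_def tendsto_at_iff_tendsto_nhds .
qed

lemma has_field_derivative_linepath_integral:
  assumes "f holomorphic_on S" "open S" "convex S" "a \<in> S" "z \<in> S"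
  shows "((\<lambda>z. contour_integral (linepath a z) f) has_field_derivative f z) (at z)"
proof -
  have "((\<lambda>z. contour_integral (linepath a z) f) has_field_derivative f z) (at z within S)"
  proof (rule triangle_contour_integrals_convex_primitive[OF _ assms(4,3,5)])
    show "continuous_on S f"
      using assms(1) by (rule holomorphic_on_imp_continuous_on)
    fix b c assume "b \<in> S" "c \<in> S"
    then have "convex hull {a, b, c} \<subseteq> S"
      using assms(3,4) by (intro hull_minimal) auto
    then have "(f has_contour_integral 0) (linepath a b +++ linepath b c +++ linepath c a)"
      using assms(1) by (intro Cauchy_theorem_triangle) (rule holomorphic_on_subset)
    then show "contour_integral (linepath a b) f + contour_integral (linepath b c) f
                 + contour_integral (linepath c a) f = 0"
      by (rule has_chain_integral_chain_integral3)
  qed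
  then show ?thesis
    by (simp only: at_within_open[OF assms(5,2)])
qed

lemma eq_cos_if_harmonic_oscillator:
  fixes f f' :: "complex \<Rightarrow> complex" and \<omega> :: complex
  assumes S: "convex S" "0 \<in> S" "x \<in> S"
    and f: "\<And>y. y \<in> S \<Longrightarrow> (f has_field_derivative f' y) (at y within S)"
    and f': "\<And>y. y \<in> S \<Longrightarrow> (f' has_field_derivative - \<omega>\<^sup>2 * f y) (at y within S)"
    and init: "f 0 = 1" "f' 0 = 0"
  shows "f x = cos (\<omega> * x)"
proof (cases "\<omega> = 0")
  case True
  have "\<exists>c. \<forall>y\<in>S. f' y = c"
    using f' True by (intro has_field_derivative_zero_constant[OF S(1)]) auto
  then have "f' y = 0" if "y \<in> S" for y
    using that S(2) init(2) by metis
  then have "\<exists>c. \<forall>y\<in>S. f y = c"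
    using f by (intro has_field_derivative_zero_constant[OF S(1)]) auto
  then show ?thesis
    using S(2,3) init(1) True by fastforce
next
  case False
  define p where "p y = \<omega> * f y * cos (\<omega> * y) - f' y * sin (\<omega> * y)" for y
  define q where "q y = \<omega> * f y * sin (\<omega> * y) + f' y * cos (\<omega> * y)" for y
  have "(p has_field_derivative 0) (at y within S)" "(q has_field_derivative 0) (at y within S)"
    if "y \<in> S" for y
    unfolding p_def [abs_def] q_def [abs_def]
    by (rule derivative_eq_intros f f' that refl | simp add: algebra_simps power2_eq_square)+
  then obtain cp cq where "\<forall>y\<in>S. p y = cp" "\<forall>y\<in>S. q y = cq"
    using has_field_derivative_zero_constant[OF S(1)] by metis
  then have "p x = p 0" "q x = q 0"
    using S(2,3) by auto
  then have "p x = \<omega>" "q x = 0"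
    by (simp_all add: p_def q_def init)
  moreover have "\<omega> * f x = p x * cos (\<omega> * x) + q x * sin (\<omega> * x)"
    unfolding p_def q_def using sin_cos_squared_add[of "\<omega> * x"] by algebra
  ultimately show ?thesis
    using False by simp
qed

lemma hyp2f1_eq_eval_fps: "hyp2f1 a b c z = eval_fps (fps_hypergeo [a, b] [c] 1) z"
  by (simp add: hyp2f1_def eval_fps_def mult.assoc)

lemma fps_hypergeo2_nth_Suc:
  fixes a b c :: "'a::field_char_0"
  assumes "c \<notin> \<int>\<^sub>\<le>\<^sub>0"
  shows "fps_hypergeo [a, b] [c] 1 $ Suc n * (of_nat (Suc n) * (c + of_nat n))
           = (a + of_nat n) * (b + of_nat n) * fps_hypergeo [a, b] [c] 1 $ n"
proof -
  have "c + of_nat n \<noteq> 0"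
    using assms plus_of_nat_eq_0_imp by blast
  then show ?thesis
    by (simp only: fps_hypergeo_rec) (simp del: of_nat_Suc)
qed

lemma fps_conv_radius_fps_hypergeo2:
  fixes a b c :: complex
  assumes "a \<notin> \<int>\<^sub>\<le>\<^sub>0" "b \<notin> \<int>\<^sub>\<le>\<^sub>0" "c \<notin> \<int>\<^sub>\<le>\<^sub>0"
  shows "fps_conv_radius (fps_hypergeo [a, b] [c] 1) = 1"
  unfolding fps_conv_radius_def
proof (rule conv_radius_ratio_limit_nonzero)
  let ?H = "fps_hypergeo [a, b] [c] 1"
  have nz: "?H $ n \<noteq> 0" for n
    using assms by (auto dest: pochhammer_eq_0_imp_nonpos_Int)
  define q where "q n = (1 + of_nat n) / (a + of_nat n) * ((c + of_nat n) / (b + of_nat n))" for n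
  have "norm (?H $ n) / norm (?H $ Suc n) = norm (q n)" for n
  proof -
    have "(a + of_nat n) * (b + of_nat n) \<noteq> 0"
      using assms plus_of_nat_eq_0_imp by auto
    then have "?H $ n / ?H $ Suc n
        = (of_nat (Suc n) * (c + of_nat n)) / ((a + of_nat n) * (b + of_nat n))"
      using fps_hypergeo2_nth_Suc[OF assms(3), where a=a and b=b and n=n] nz[of "Suc n"]
      by (simp del: fps_hypergeo_nth of_nat_Suc add: frac_eq_eq ac_simps)
    then show ?thesis
      by (simp add: q_def norm_divide [symmetric])
  qed
  moreover have "(\<lambda>n. norm (q n)) \<longlonglongrightarrow> norm (1 * 1 :: complex)"
    unfolding q_def by (intro tendsto_intros LIMSEQ_add_of_nat_divide_add_of_nat)
  ultimately show "(\<lambda>n. norm (?H $ n) / norm (?H $ Suc n)) \<longlonglongrightarrow> 1"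
    by simp
qed simp_all

lemma fps_hypergeo2_ode:
  fixes a b c :: "'a::field_char_0"
  assumes "c \<notin> \<int>\<^sub>\<le>\<^sub>0"
  defines "H \<equiv> fps_hypergeo [a, b] [c] 1"
  shows "fps_X * (1 - fps_X) * fps_deriv (fps_deriv H)
           + (fps_const c - fps_const (a + b + 1) * fps_X) * fps_deriv H = fps_const (a * b) * H"
    (is "?L = ?R")
proof (rule fps_ext)
  fix n
  have rec: "H $ Suc m * (of_nat (Suc m) * (c + of_nat m)) = (a + of_nat m) * (b + of_nat m) * H $ m"
    for m
    unfolding H_def by (rule fps_hypergeo2_nth_Suc[OF assms(1)])
  show "?L $ n = ?R $ n"
  proof (cases n)
    case 0
    then show ?thesis using rec[of 0] by (simp add: algebra_simps)
  next
    case (Suc m)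
    then show ?thesis using rec[of n] by (cases m) (simp_all add: algebra_simps)
  qed
qed

lemma eval_fps_hypergeo2_ode:
  fixes a b c z :: complex
  assumes "a \<notin> \<int>\<^sub>\<le>\<^sub>0" "b \<notin> \<int>\<^sub>\<le>\<^sub>0" "c \<notin> \<int>\<^sub>\<le>\<^sub>0" "norm z < 1"
  defines "H \<equiv> fps_hypergeo [a, b] [c] 1"
  shows "z * (1 - z) * eval_fps (fps_deriv (fps_deriv H)) z
           + (c - (a + b + 1) * z) * eval_fps (fps_deriv H) z = a * b * eval_fps H z"
proof -
  have R: "ereal (norm z) < fps_conv_radius H"
    using assms by (simp add: H_def fps_conv_radius_fps_hypergeo2)
  have R': "ereal (norm z) < fps_conv_radius (fps_deriv H)"
    using R fps_conv_radius_deriv[of H] by (rule less_le_trans)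
  have R'': "ereal (norm z) < fps_conv_radius (fps_deriv (fps_deriv H))"
    using R' fps_conv_radius_deriv[of "fps_deriv H"] by (rule less_le_trans)
  show ?thesis
    using arg_cong[OF fps_hypergeo2_ode[OF assms(3), where a = a and b = b, folded H_def],
        of "\<lambda>G. eval_fps G z"] R R' R''
    by (simp add: eval_fps_mult eval_fps_add eval_fps_diff fps_conv_radius_gt_add_diff_mult)
qed

lemma holomorphic_on_hyp2f1:
  assumes "a \<notin> \<int>\<^sub>\<le>\<^sub>0" "b \<notin> \<int>\<^sub>\<le>\<^sub>0" "c \<notin> \<int>\<^sub>\<le>\<^sub>0"
  shows "hyp2f1 a b c holomorphic_on ball 0 1"
  unfolding hyp2f1_eq_eval_fps [abs_def]
  by (intro holomorphic_on_eval_fps ball_eball_mono) (simp add: fps_conv_radius_fps_hypergeo2 assms)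

lemma has_field_derivative_eval_fps_sin_squared:
  fixes G :: "complex fps"
  assumes "ereal (norm ((sin x)\<^sup>2)) < fps_conv_radius G"
  shows "((\<lambda>x. eval_fps G ((sin x)\<^sup>2)) has_field_derivative
           eval_fps (fps_deriv G) ((sin x)\<^sup>2) * (2 * sin x * cos x)) (at x)"
proof -
  have "(eval_fps G has_field_derivative eval_fps (fps_deriv G) ((sin x)\<^sup>2)) (at ((sin x)\<^sup>2))"
    using assms by (rule has_field_derivative_eval_fps)
  moreover have "((\<lambda>x. (sin x)\<^sup>2) has_field_derivative 2 * sin x * cos x) (at x)"
    by (rule derivative_eq_intros refl | simp)+
  ultimately show ?thesis
    by (rule DERIV_chain2)
qed

lemma has_field_derivative_hypergeo_sin_squared_mult_cos:
  fixes a b x :: complex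
  assumes "a \<notin> \<int>\<^sub>\<le>\<^sub>0" "b \<notin> \<int>\<^sub>\<le>\<^sub>0" "a + b = 1" "norm (sin x) < 1"
  defines "H \<equiv> fps_hypergeo [a, b] [1/2] 1"
  defines "W \<equiv> \<lambda>x. eval_fps H ((sin x)\<^sup>2) * cos x"
    and "W' \<equiv> \<lambda>x. 2 * sin x * (cos x)\<^sup>2 * eval_fps (fps_deriv H) ((sin x)\<^sup>2)
                    - sin x * eval_fps H ((sin x)\<^sup>2)"
  shows "(W has_field_derivative W' x) (at x)" "(W' has_field_derivative - (b - a)\<^sup>2 * W x) (at x)"
proof -
  have c: "(1/2::complex) \<notin> \<int>\<^sub>\<le>\<^sub>0"
    by (simp add: not_nonpos_Ints_if_Re_pos)
  have z: "norm ((sin x)\<^sup>2) < 1"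
    using assms(4) by (simp add: norm_power power_less_one_iff)
  have R: "ereal (norm ((sin x)\<^sup>2)) < fps_conv_radius H"
    using z assms(1,2) c by (simp add: H_def fps_conv_radius_fps_hypergeo2)
  have R': "ereal (norm ((sin x)\<^sup>2)) < fps_conv_radius (fps_deriv H)"
    using R fps_conv_radius_deriv[of H] by (rule less_le_trans)
  note dH = has_field_derivative_eval_fps_sin_squared[OF R]
  note dH' = has_field_derivative_eval_fps_sin_squared[OF R']
  show "(W has_field_derivative W' x) (at x)"
    unfolding W_def W'_def
    by (rule derivative_eq_intros dH refl | simp add: algebra_simps power2_eq_square)+
  have ode: "(sin x)\<^sup>2 * (1 - (sin x)\<^sup>2) * eval_fps (fps_deriv (fps_deriv H)) ((sin x)\<^sup>2)
      + (1/2 - 2 * (sin x)\<^sup>2) * eval_fps (fps_deriv H) ((sin x)\<^sup>2) = a * b * eval_fps H ((sin x)\<^sup>2)"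
    using eval_fps_hypergeo2_ode[OF assms(1,2) c z] assms(3) by (simp add: H_def)
  (* the residual is 4 cos x times the hypergeometric equation at sin^2 x *)
  show "(W' has_field_derivative - (b - a)\<^sup>2 * W x) (at x)"
    unfolding W'_def
    by (rule dH dH' derivative_eq_intros refl)+
      (use ode sin_cos_squared_add[of x] assms(3) in \<open>simp add: W_def power2_eq_square; algebra\<close>)
qed

lemma hyp2f1_sin_squared_mult_cos:
  fixes a b :: complex
  assumes "a \<notin> \<int>\<^sub>\<le>\<^sub>0" "b \<notin> \<int>\<^sub>\<le>\<^sub>0" "a + b = 1"
  shows "\<forall>\<^sub>F x in nhds 0. hyp2f1 a b (1/2) ((sin x)\<^sup>2) * cos x = cos ((b - a) * x)"
proof -
  have "open {x::complex. norm (sin x) < 1}"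
    by (intro open_Collect_less continuous_intros)
  then obtain \<rho> where "\<rho> > 0" and \<rho>: "ball 0 \<rho> \<subseteq> {x::complex. norm (sin x) < 1}"
    by (metis mem_Collect_eq norm_zero open_contains_ball sin_zero zero_less_one)
  define H where "H = fps_hypergeo [a, b] [1/2::complex] 1"
  define W' where "W' x = 2 * sin x * (cos x)\<^sup>2 * eval_fps (fps_deriv H) ((sin x)\<^sup>2)
                          - sin x * eval_fps H ((sin x)\<^sup>2)" for x
  have "hyp2f1 a b (1/2) ((sin x)\<^sup>2) * cos x = cos ((b - a) * x)" if "x \<in> ball 0 \<rho>" for x
    unfolding hyp2f1_eq_eval_fps H_def [symmetric]
  proof (rule eq_cos_if_harmonic_oscillator[where f' = W', OF convex_ball _ that])
    fix y assume "y \<in> ball (0::complex) \<rho>"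
    then have "norm (sin y) < 1"
      using \<rho> by blast
    from has_field_derivative_hypergeo_sin_squared_mult_cos[OF assms this, folded H_def]
    show "((\<lambda>x. eval_fps H ((sin x)\<^sup>2) * cos x) has_field_derivative W' y)
        (at y within ball 0 \<rho>)"
      "(W' has_field_derivative - (b - a)\<^sup>2 * (eval_fps H ((sin y)\<^sup>2) * cos y))
        (at y within ball 0 \<rho>)"
      unfolding W'_def [abs_def] by (auto intro: has_field_derivative_at_within)
  qed (use \<open>\<rho> > 0\<close> in \<open>simp_all add: W'_def H_def eval_fps_at_0\<close>)
  then show ?thesis
    using eventually_nhds_in_open[of "ball 0 \<rho>" 0] \<open>\<rho> > 0\<close> by (auto elim: eventually_mono)
qed

lemma one_minus_square_notin_nonpos_Reals:
  fixes t :: complex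
  assumes "norm t < 1"
  shows "1 - t\<^sup>2 \<notin> \<real>\<^sub>\<le>\<^sub>0"
proof -
  have "norm (t\<^sup>2) < 1"
    using assms by (simp add: norm_power abs_square_less_1)
  then have "0 < Re (1 - t\<^sup>2)"
    using complex_Re_le_cmod[of "t\<^sup>2"] by simp
  then show ?thesis
    by (auto simp: complex_nonpos_Reals_iff)
qed

lemma holomorphic_on_U_of_phi_integrand:
  assumes "\<bar>\<kappa>\<bar> \<le> 1"
  shows "(\<lambda>t. hyp2f1 (1/6) (5/6) (1/2) ((of_real \<kappa>)\<^sup>2 * t\<^sup>2) / csqrt (1 - t\<^sup>2))
           holomorphic_on ball 0 1"
proof -
  have "(of_real \<kappa>)\<^sup>2 * t\<^sup>2 \<in> ball 0 1" if "t \<in> ball 0 1" for t :: complex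
  proof -
    have "norm ((of_real \<kappa>)\<^sup>2 * t\<^sup>2) = \<kappa>\<^sup>2 * (norm t)\<^sup>2"
      by (simp add: norm_mult norm_power)
    also have "\<dots> \<le> (norm t)\<^sup>2"
      using assms abs_square_le_1 by (intro mult_left_le_one_le) auto
    also have "(norm t)\<^sup>2 < 1"
      using that by (simp add: abs_square_less_1)
    finally show ?thesis
      by simp
  qed
  moreover have "hyp2f1 (1/6) (5/6) (1/2) holomorphic_on ball 0 1"
    by (intro holomorphic_on_hyp2f1) (simp_all add: not_nonpos_Ints_if_Re_pos)
  ultimately have "(hyp2f1 (1/6) (5/6) (1/2) \<circ> (\<lambda>t. (of_real \<kappa>)\<^sup>2 * t\<^sup>2)) holomorphic_on ball 0 1"
    by (intro holomorphic_on_compose_gen[of _ _ _ "ball 0 1"] holomorphic_intros) auto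
  moreover have "(\<lambda>t. csqrt (1 - t\<^sup>2)) holomorphic_on ball 0 1"
    by (intro holomorphic_intros one_minus_square_notin_nonpos_Reals) simp
  moreover have "csqrt (1 - t\<^sup>2) \<noteq> 0" if "t \<in> ball 0 1" for t :: complex
    using one_minus_square_notin_nonpos_Reals[of t] that by auto
  ultimately show ?thesis
    unfolding comp_def by (rule holomorphic_on_divide)
qed

lemma U_of_phi_has_field_derivative:
  assumes "\<bar>\<kappa>\<bar> \<le> 1" "norm (sin \<phi>) < 1" "0 < Re (cos \<phi>)"
  shows "(U_of_phi \<kappa> has_field_derivative
           hyp2f1 (1/6) (5/6) (1/2) ((of_real \<kappa>)\<^sup>2 * (sin \<phi>)\<^sup>2)) (at \<phi>)"
proof -
  define g where "g t = hyp2f1 (1/6) (5/6) (1/2) ((of_real \<kappa>)\<^sup>2 * t\<^sup>2) / csqrt (1 - t\<^sup>2)" for t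
  have "((\<lambda>\<phi>. contour_integral (linepath 0 (sin \<phi>)) g)
          has_field_derivative g (sin \<phi>) * cos \<phi>) (at \<phi>)"
    using holomorphic_on_U_of_phi_integrand[OF assms(1), folded g_def [abs_def]] assms(2)
    by (intro DERIV_chain2[OF has_field_derivative_linepath_integral DERIV_sin]) auto
  moreover have "1 - (sin \<phi>)\<^sup>2 = (cos \<phi>)\<^sup>2"
    using sin_cos_squared_add[of \<phi>] by (simp add: algebra_simps)
  then have "g (sin \<phi>) * cos \<phi> = hyp2f1 (1/6) (5/6) (1/2) ((of_real \<kappa>)\<^sup>2 * (sin \<phi>)\<^sup>2)"
    using assms(3) by (auto simp: g_def csqrt_square)
  moreover have "U_of_phi \<kappa> = (\<lambda>\<phi>. contour_integral (linepath 0 (sin \<phi>)) g)"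
    by (simp add: U_of_phi_def [abs_def] g_def [abs_def])
  ultimately show ?thesis
    by simp
qed

lemma cos_two_thirds_deriv_squared_eq:
  fixes \<psi> \<psi>' k :: complex
  defines "D \<equiv> cos (2/3 * \<psi>)"
  assumes "D \<noteq> 0" "(D * \<psi>')\<^sup>2 = k\<^sup>2 - (sin \<psi>)\<^sup>2"
  shows "9 * (- sin (2/3 * \<psi>) * (2/3 * \<psi>'))\<^sup>2
           = 2 * (1 - D\<^sup>2) * (4 * D^3 - 3 * D + 1 - 2 * (1 - k\<^sup>2)) / D\<^sup>2"
proof -
  have "cos (2 * \<psi>) = 4 * D^3 - 3 * D"
    using cos_treble_cos[of "2/3 * \<psi>"] by (simp add: D_def)
  then have "2 * (cos \<psi>)\<^sup>2 = 4 * D^3 - 3 * D + 1"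
    using cos_double_cos[of \<psi>] by algebra
  moreover have "(sin (2/3 * \<psi>))\<^sup>2 = 1 - D\<^sup>2"
    using sin_cos_squared_add[of "2/3 * \<psi>"] by (simp add: D_def algebra_simps)
  ultimately have "9 * (- sin (2/3 * \<psi>) * (2/3 * \<psi>'))\<^sup>2 * D\<^sup>2
      = 2 * (1 - D\<^sup>2) * (4 * D^3 - 3 * D + 1 - 2 * (1 - k\<^sup>2))"
    using assms(3) sin_cos_squared_add[of \<psi>] by algebra
  then show ?thesis
    using assms(2) by (simp add: eq_divide_eq)
qed

context
  fixes \<kappa> :: real and S :: "complex set" and \<phi> \<psi> :: "complex \<Rightarrow> complex"
  assumes \<kappa>: "\<bar>\<kappa>\<bar> \<le> 1" and S: "open S"
    and holo: "\<phi> holomorphic_on S" "\<psi> holomorphic_on S"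
    and U_\<phi>: "\<forall>v\<in>S. U_of_phi \<kappa> (\<phi> v) = v"
    and sin_\<psi>: "\<forall>v\<in>S. sin (\<psi> v) = of_real \<kappa> * sin (\<phi> v)"
begin

lemma cos_two_thirds_mult_deriv:
  assumes u: "u \<in> S" and \<phi>u: "norm (sin (\<phi> u)) < 1" "0 < Re (cos (\<phi> u))"
    and F: "hyp2f1 (1/6) (5/6) (1/2) ((sin (\<psi> u))\<^sup>2) * cos (\<psi> u) = cos (2/3 * \<psi> u)"
  shows "cos (2/3 * \<psi> u) * deriv \<psi> u = of_real \<kappa> * cos (\<phi> u)"
proof -
  define F where "F = hyp2f1 (1/6) (5/6) (1/2) ((sin (\<psi> u))\<^sup>2)"
  have d\<phi>: "(\<phi> has_field_derivative deriv \<phi> u) (at u)"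
    and d\<psi>: "(\<psi> has_field_derivative deriv \<psi> u) (at u)"
    using holo S u by (auto intro: holomorphic_derivI)
  have "F = hyp2f1 (1/6) (5/6) (1/2) ((of_real \<kappa>)\<^sup>2 * (sin (\<phi> u))\<^sup>2)"
    using sin_\<psi> u by (simp add: F_def power_mult_distrib)
  then have "((\<lambda>v. U_of_phi \<kappa> (\<phi> v)) has_field_derivative F * deriv \<phi> u) (at u)"
    using DERIV_chain2[OF U_of_phi_has_field_derivative[OF \<kappa> \<phi>u] d\<phi>] by simp
  moreover have "((\<lambda>v. U_of_phi \<kappa> (\<phi> v)) has_field_derivative 1) (at u)"
    by (rule has_field_derivative_transform_within_open[OF DERIV_ident S u]) (use U_\<phi> in simp)
  ultimately have F\<phi>: "F * deriv \<phi> u = 1"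
    by (rule DERIV_unique)
  have "((\<lambda>v. sin (\<psi> v)) has_field_derivative cos (\<psi> u) * deriv \<psi> u) (at u)"
    using d\<psi> by (rule DERIV_chain2[OF DERIV_sin])
  moreover have "((\<lambda>v. sin (\<psi> v)) has_field_derivative of_real \<kappa> * (cos (\<phi> u) * deriv \<phi> u)) (at u)"
    using DERIV_cmult[OF DERIV_chain2[OF DERIV_sin d\<phi>]]
    by (rule has_field_derivative_transform_within_open[OF _ S u]) (use sin_\<psi> in simp)
  ultimately have \<psi>\<phi>: "cos (\<psi> u) * deriv \<psi> u = of_real \<kappa> * (cos (\<phi> u) * deriv \<phi> u)"
    by (rule DERIV_unique)
  have "cos (2/3 * \<psi> u) * deriv \<psi> u = F * (cos (\<psi> u) * deriv \<psi> u)"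
    using F by (simp add: F_def)
  also have "\<dots> = of_real \<kappa> * cos (\<phi> u) * (F * deriv \<phi> u)"
    by (simp add: \<psi>\<phi>)
  finally show ?thesis
    by (simp add: F\<phi>)
qed

lemma deriv_cos_two_thirds_squared:
  assumes u: "u \<in> S" and \<phi>u: "norm (sin (\<phi> u)) < 1" "0 < Re (cos (\<phi> u))"
    and D: "cos (2/3 * \<psi> u) \<noteq> 0"
    and F: "hyp2f1 (1/6) (5/6) (1/2) ((sin (\<psi> u))\<^sup>2) * cos (\<psi> u) = cos (2/3 * \<psi> u)"
  shows "9 * (deriv (\<lambda>v. cos (2/3 * \<psi> v)) u)\<^sup>2 =
    2 * (1 - (cos (2/3 * \<psi> u))\<^sup>2) * (4 * (cos (2/3 * \<psi> u))^3 - 3 * cos (2/3 * \<psi> u) + 1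
      - 2 * (1 - (of_real \<kappa>)\<^sup>2)) / (cos (2/3 * \<psi> u))\<^sup>2"
proof -
  have "sin (\<psi> u) = of_real \<kappa> * sin (\<phi> u)"
    using sin_\<psi> u by blast
  then have "(cos (2/3 * \<psi> u) * deriv \<psi> u)\<^sup>2 = (of_real \<kappa>)\<^sup>2 - (sin (\<psi> u))\<^sup>2"
    using cos_two_thirds_mult_deriv[OF u \<phi>u F] sin_cos_squared_add[of "\<phi> u"] by algebra
  moreover have "deriv (\<lambda>v. cos (2/3 * \<psi> v)) u = - sin (2/3 * \<psi> u) * (2/3 * deriv \<psi> u)"
    using holomorphic_derivI[OF holo(2) S u]
    by (intro DERIV_imp_deriv DERIV_chain2[OF DERIV_cos DERIV_cmult])
  ultimately show ?thesis
    using cos_two_thirds_deriv_squared_eq[OF D] by simp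
qed

end

theorem theorem6:
  fixes \<kappa> lam r :: real and \<phi> \<psi> :: "complex \<Rightarrow> complex"
  assumes "0 < \<kappa>" "\<kappa> < 1" "lam = sqrt (1 - \<kappa>\<^sup>2)"
    and "0 < r"
    and "\<phi> holomorphic_on ball 0 r" "\<phi> 0 = 0"
    and "\<forall>u\<in>ball 0 r. U_of_phi \<kappa> (\<phi> u) = u"
    and "\<psi> holomorphic_on ball 0 r" "\<psi> 0 = 0"
    and "\<forall>u\<in>ball 0 r. sin (\<psi> u) = complex_of_real \<kappa> * sin (\<phi> u)"
  shows "\<forall>\<^sub>F u in nhds 0.
     (let d = (\<lambda>v. cos (2/3 * \<psi> v)) in
       9 * (deriv d u)\<^sup>2 =
       2 * (1 - (d u)\<^sup>2) * (4 * (d u)^3 - 3 * d u + 1 - 2 * (complex_of_real lam)\<^sup>2) / (d u)\<^sup>2)"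
proof -
  have lam: "(complex_of_real lam)\<^sup>2 = 1 - (complex_of_real \<kappa>)\<^sup>2"
    using assms(1-3) power_le_one[of \<kappa> 2] by (simp flip: of_real_power)
  have t\<phi>: "(\<phi> \<longlongrightarrow> 0) (nhds 0)" and t\<psi>: "(\<psi> \<longlongrightarrow> 0) (nhds 0)"
    using tendsto_nhds_if_holomorphic[of _ "ball 0 r" 0] assms(4-6,8,9)
    by (metis centre_in_ball open_ball)+
  have "\<forall>\<^sub>F u in nhds 0. \<phi> u \<in> {z. norm (sin z) < 1 \<and> 0 < Re (cos z)}"
    by (rule topological_tendstoD[OF t\<phi>])
      (auto intro!: open_Collect_conj open_Collect_less continuous_intros)
  moreover have "\<forall>\<^sub>F u in nhds 0. \<psi> u \<in> {z. cos (2/3 * z) \<noteq> 0}"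
    by (rule topological_tendstoD[OF t\<psi>]) (auto intro!: open_Collect_neq continuous_intros)
  moreover have "\<forall>\<^sub>F z in nhds 0. hyp2f1 (1/6) (5/6) (1/2) ((sin z)\<^sup>2) * cos z = cos (2/3 * z)"
    using hyp2f1_sin_squared_mult_cos[of "1/6" "5/6"] by (simp add: not_nonpos_Ints_if_Re_pos)
  then have "\<forall>\<^sub>F u in nhds 0.
      hyp2f1 (1/6) (5/6) (1/2) ((sin (\<psi> u))\<^sup>2) * cos (\<psi> u) = cos (2/3 * \<psi> u)"
    using t\<psi> by (rule eventually_compose_filterlim)
  moreover have "\<forall>\<^sub>F u in nhds 0. u \<in> ball 0 r"
    using assms(4) by (intro eventually_nhds_in_open) auto
  ultimately show ?thesis
  proof eventually_elim
    case (elim u)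
    with deriv_cos_two_thirds_squared[OF _ open_ball assms(5,8,7,10)] assms(1,2) show ?case
      unfolding Let_def lam by simp
  qed
qed

end
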